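(* Let $(Z_k)_{k\ge1}$ be independent symmetrical real-valued random variables with unit variance, let $(a_{n,k})_{1\le k\le n<\infty}$ be real numbers, set $X_n=\sum_{k=1}^n a_{n,k}Z_k$, and let $(u_n)$ be vectors in a Hilbert space $\mathbb{H}$. Suppose there exist constants $C>0$ and $\alpha>1$ such that $|a_{n,k}|\le C(n-k+1)^{-\alpha}$ for all $1\le k\le n$. If $\sum_{n=1}^\infty\|u_n\|^2<\infty$, then $\sum_{n=1}^\infty X_nu_n$ converges almost surely in $\mathbb{H}$, and so does $\sum_{n=1}^\infty \epsilon_nX_nu_n$ for every non-random choice of signs $(\epsilon_n)\in\{-1,1\}^{\mathbb{N}}$.
   Context: A real random variable $Z$ is symmetrical if $Z$ and $-Z$ have the same distribution; unit variance means $\mathbb{E}(Z^2)=1$. *)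

theory Defs
  imports "HOL-Probability.Probability"
begin

definition symmetric_rv :: "'a measure \<Rightarrow> ('a \<Rightarrow> real) \<Rightarrow> bool" where
  "symmetric_rv M Z \<longleftrightarrow> distr M borel Z = distr M borel (\<lambda>x. - Z x)"

end

theory Submission
  imports Defs
begin

text \<open>Exchanging the order of summation, \<open>\<Sum>\<^sub>n X\<^sub>n u\<^sub>n = \<Sum>\<^sub>l S\<^sub>l\<close>, where \<open>S\<^sub>l\<close> is the
  series \<open>\<Sum>\<^sub>k Z\<^sub>k a(k + l, k) u(k + l)\<close> of orthogonal random vectors. Kolmogorov's maximal
  inequality, integrated over dyadic levels, bounds the expected supremum of the norms of the partial
  sums of \<open>S\<^sub>l\<close> by \<open>5 (\<Sum>\<^sub>k a(k + l, k)\<^sup>2 \<parallel>u(k + l)\<parallel>\<^sup>2)\<^sup>1\<^sup>/\<^sup>2 \<le> 5 C (l + 1)\<^sup>-\<^sup>\<alpha> (\<Sum>\<^sub>n \<parallel>u\<^sub>n\<parallel>\<^sup>2)\<^sup>1\<^sup>/\<^sup>2\<close>,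
  which is summable in \<open>l\<close> since \<open>\<alpha> > 1\<close>. So almost surely every \<open>S\<^sub>l\<close> converges and all their
  partial sums are dominated by one summable sequence; a Tannery-type exchange of limits then gives
  convergence of \<open>\<Sum>\<^sub>n\<^sub><\<^sub>N X\<^sub>n u\<^sub>n\<close>, a sum along diagonals. Symmetry of the \<open>Z\<^sub>k\<close> is used only
  to get mean zero, and the signs \<open>\<epsilon>\<^sub>n\<close> are absorbed into \<open>u\<^sub>n\<close>.\<close>

section \<open>Layer-cake bound from a weak \<open>L\<^sup>2\<close> tail\<close>

lemma ennreal_le_dyadic_layers:
  fixes y \<delta> :: real
  assumes \<delta>: "0 < \<delta>"
  shows "ennreal y \<le> ennreal \<delta> + (\<Sum>i. ennreal (\<delta> * 2 ^ Suc i) * of_bool (\<delta> * 2 ^ i < y))"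
proof (cases "y \<le> \<delta>")
  case True
  then show ?thesis by (intro add_increasing2 ennreal_leI) simp_all
next
  case False
  obtain N where "y / \<delta> < 2 ^ N" using real_arch_pow[of 2 "y / \<delta>"] by auto
  then have "y < \<delta> * 2 ^ N" using \<delta> by (simp add: field_simps)
  also have "\<dots> \<le> \<delta> * 2 ^ Suc N" using \<delta> by simp
  finally have ex: "\<exists>i. y \<le> \<delta> * 2 ^ Suc i" using less_imp_le by blast
  define i0 where "i0 = (LEAST i. y \<le> \<delta> * 2 ^ Suc i)"
  have i0: "y \<le> \<delta> * 2 ^ Suc i0" unfolding i0_def by (rule LeastI_ex[OF ex])
  have i0': "\<delta> * 2 ^ i0 < y"
  proof (cases i0)
    case 0
    then show ?thesis using False by simp
  next
    case (Suc k)
    then have "\<not> y \<le> \<delta> * 2 ^ Suc k"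
      using not_less_Least[of k "\<lambda>i. y \<le> \<delta> * 2 ^ Suc i"] unfolding i0_def[symmetric] by auto
    then show ?thesis using Suc by simp
  qed
  have "ennreal y \<le> ennreal (\<delta> * 2 ^ Suc i0) * of_bool (\<delta> * 2 ^ i0 < y)"
    using i0 i0' by (simp add: ennreal_leI)
  also have "\<dots> \<le> (\<Sum>i. ennreal (\<delta> * 2 ^ Suc i) * of_bool (\<delta> * 2 ^ i < y))"
    using sum_le_suminf[OF summableI, of "{i0}" "\<lambda>i. ennreal (\<delta> * 2 ^ Suc i) * of_bool (\<delta> * 2 ^ i < y)"]
    by auto
  also have "\<dots> \<le> ennreal \<delta> + \<dots>" by simp
  finally show ?thesis .
qed

text \<open>Sum the tail bound over the dyadic levels \<open>sqrt V * 2 ^ i\<close>.\<close>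
lemma (in prob_space) nn_integral_le_of_tail_bound:
  assumes [measurable]: "y \<in> borel_measurable M" and V: "0 < V"
    and tail: "\<And>s. 0 < s \<Longrightarrow> prob {x\<in>space M. s < y x} \<le> V / s\<^sup>2"
  shows "(\<integral>\<^sup>+x. ennreal (y x) \<partial>M) \<le> ennreal (5 * sqrt V)"
proof -
  define \<delta> where "\<delta> = sqrt V"
  have \<delta>: "0 < \<delta>" "\<delta>\<^sup>2 = V" using V by (auto simp: \<delta>_def)
  define A where "A i = {x\<in>space M. \<delta> * 2 ^ i < y x}" for i :: nat
  have A_sets[measurable]: "A i \<in> sets M" for i unfolding A_def by measurable
  have layer: "ennreal (\<delta> * 2 ^ Suc i) * emeasure M (A i) \<le> ennreal (2 * \<delta> * (1/2) ^ i)" for i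
  proof -
    have "\<delta> * 2 ^ Suc i * prob (A i) \<le> \<delta> * 2 ^ Suc i * (V / (\<delta> * 2 ^ i)\<^sup>2)"
      unfolding A_def using tail[of "\<delta> * 2 ^ i"] \<delta> by (intro mult_left_mono) auto
    also have "\<dots> = 2 * \<delta> * (1/2) ^ i"
      using \<delta> by (simp add: power2_eq_square field_simps power_one_over)
    finally show ?thesis
      using \<delta> by (simp add: emeasure_eq_measure ennreal_mult[symmetric] ennreal_leI del: power_Suc)
  qed
  have "(\<integral>\<^sup>+x. ennreal (y x) \<partial>M)
      \<le> (\<integral>\<^sup>+x. ennreal \<delta> + (\<Sum>i. ennreal (\<delta> * 2 ^ Suc i) * indicator (A i) x) \<partial>M)"
    using ennreal_le_dyadic_layers[OF \<delta>(1)]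
    by (intro nn_integral_mono) (simp add: A_def indicator_def of_bool_def)
  also have "\<dots> = ennreal \<delta> + (\<Sum>i. ennreal (\<delta> * 2 ^ Suc i) * emeasure M (A i))"
    by (subst nn_integral_add) (auto simp: nn_integral_suminf nn_integral_cmult_indicator emeasure_space_1)
  also have "\<dots> \<le> ennreal \<delta> + (\<Sum>i. ennreal (2 * \<delta> * (1/2) ^ i))"
    by (intro add_left_mono suminf_le summableI layer)
  also have "(\<Sum>i. ennreal (2 * \<delta> * (1/2) ^ i)) = ennreal (4 * \<delta>)"
  proof -
    have s: "(\<lambda>i. 2 * \<delta> * (1/2::real) ^ i) sums (2 * \<delta> * 2)"
      using sums_mult[OF geometric_sums[of "1/2::real"], of "2 * \<delta>"] by simp
    then show ?thesis
      using \<delta> by (subst suminf_ennreal2) (auto simp: sums_summable[OF s] sums_unique[OF s, symmetric])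
  qed
  also have "ennreal \<delta> + ennreal (4 * \<delta>) = ennreal (5 * sqrt V)"
    using \<delta> by (simp add: ennreal_plus[symmetric] \<delta>_def del: ennreal_plus)
  finally show ?thesis .
qed

section \<open>Exchanging limits along diagonals\<close>

lemma sum_diagonals:
  fixes f :: "nat \<Rightarrow> nat \<Rightarrow> 'b::comm_monoid_add"
  shows "(\<Sum>n<N. \<Sum>k\<in>{1..Suc n}. f (Suc n) k) = (\<Sum>l<N. \<Sum>k\<in>{1..<N - l + 1}. f (k + l) k)"
proof -
  have "(\<Sum>n<N. \<Sum>k\<in>{1..Suc n}. f (Suc n) k) = (\<Sum>(n, k)\<in>(SIGMA n:{..<N}. {1..Suc n}). f (Suc n) k)"
    by (rule sum.Sigma) auto
  also have "\<dots> = (\<Sum>(l, k)\<in>(SIGMA l:{..<N}. {1..<N - l + 1}). f (k + l) k)"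
    by (rule sum.reindex_bij_witness[where i="\<lambda>(l, k). (k + l - 1, k)" and j="\<lambda>(n, k). (Suc n - k, k)"])
      auto
  also have "\<dots> = (\<Sum>l<N. \<Sum>k\<in>{1..<N - l + 1}. f (k + l) k)"
    by (rule sum.Sigma[symmetric]) auto
  finally show ?thesis .
qed

lemma Cauchy_uniform_lessThan:
  fixes T :: "nat \<Rightarrow> nat \<Rightarrow> 'a::metric_space"
  assumes "\<And>l. l < L \<Longrightarrow> convergent (T l)" and "0 < d"
  obtains K where "\<And>l n n'. l < L \<Longrightarrow> K \<le> n \<Longrightarrow> K \<le> n' \<Longrightarrow> dist (T l n) (T l n') < d"
proof -
  have "\<forall>l\<in>{..<L}. eventually (\<lambda>K. \<forall>n\<ge>K. \<forall>n'\<ge>K. dist (T l n) (T l n') < d) sequentially"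
  proof
    fix l assume "l \<in> {..<L}"
    then have "Cauchy (T l)" using assms(1) by (simp add: convergent_Cauchy)
    then obtain K where "\<forall>n\<ge>K. \<forall>n'\<ge>K. dist (T l n) (T l n') < d"
      using assms(2) unfolding Cauchy_def by blast
    then show "eventually (\<lambda>K. \<forall>n\<ge>K. \<forall>n'\<ge>K. dist (T l n) (T l n') < d) sequentially"
      by (intro eventually_sequentiallyI[of K]) auto
  qed
  then have "eventually (\<lambda>K. \<forall>l\<in>{..<L}. \<forall>n\<ge>K. \<forall>n'\<ge>K. dist (T l n) (T l n') < d) sequentially"
    by (rule eventually_ball_finite[OF finite_lessThan])
  then obtain K where "\<forall>l\<in>{..<L}. \<forall>n\<ge>K. \<forall>n'\<ge>K. dist (T l n) (T l n') < d"
    unfolding eventually_sequentially by blast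
  then show ?thesis by (intro that[of K]) simp
qed

text \<open>A Tannery-type theorem; the library's \<open>tannerys_theorem\<close> needs a normed algebra as range.\<close>
lemma convergent_sum_diagonal:
  fixes T :: "nat \<Rightarrow> nat \<Rightarrow> 'b::{real_normed_vector, complete_space}"
  assumes T0: "\<And>l. T l 0 = 0" and T_bound: "\<And>l n. norm (T l n) \<le> b l" and b: "summable b"
    and T_conv: "\<And>l. convergent (T l)"
  shows "convergent (\<lambda>N. \<Sum>l<N. T l (N - l))"
proof (rule Cauchy_convergent, rule metric_CauchyI)
  fix e :: real assume e: "0 < e"
  obtain L where L: "\<And>Q. norm (\<Sum>l\<in>{L..<Q}. b l) < e / 4"
    using b e unfolding summable_Cauchy by (meson order_refl zero_less_divide_iff zero_less_numeral)
  define d where "d = e / (2 * (real L + 1))"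
  have d: "0 < d" using e by (simp add: d_def)
  obtain K where K: "\<And>l n n'. l < L \<Longrightarrow> K \<le> n \<Longrightarrow> K \<le> n' \<Longrightarrow> dist (T l n) (T l n') < d"
    using Cauchy_uniform_lessThan[of L T d] T_conv d by blast
  show "\<exists>N0. \<forall>N\<ge>N0. \<forall>N'\<ge>N0. dist (\<Sum>l<N. T l (N - l)) (\<Sum>l<N'. T l (N' - l)) < e"
  proof (intro exI allI impI)
    fix N N' assume N: "K + L \<le> N" and N': "K + L \<le> N'"
    define Q where "Q = max N N'"
    have extend: "(\<Sum>l<R. T l (R - l)) = (\<Sum>l<Q. T l (R - l))" if "R \<le> Q" for R
      using that by (intro sum.mono_neutral_left) (auto simp: T0)
    have "dist (\<Sum>l<N. T l (N - l)) (\<Sum>l<N'. T l (N' - l))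
        \<le> (\<Sum>l<Q. norm (T l (N - l) - T l (N' - l)))"
      using extend[of N] extend[of N'] norm_sum[of "\<lambda>l. T l (N - l) - T l (N' - l)" "{..<Q}"]
      by (simp add: Q_def dist_norm sum_subtractf)
    also have "\<dots> = (\<Sum>l<L. norm (T l (N - l) - T l (N' - l)))
        + (\<Sum>l\<in>{L..<Q}. norm (T l (N - l) - T l (N' - l)))"
      using sum.atLeastLessThan_concat[of 0 L Q "\<lambda>l. norm (T l (N - l) - T l (N' - l))"] N
      by (simp add: Q_def atLeast0LessThan)
    also have "\<dots> \<le> (\<Sum>l<L. d) + (\<Sum>l\<in>{L..<Q}. 2 * b l)"
    proof (intro add_mono sum_mono)
      fix l assume "l \<in> {..<L}"
      then have "K \<le> N - l" "K \<le> N' - l" using N N' by auto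
      with \<open>l \<in> {..<L}\<close> show "norm (T l (N - l) - T l (N' - l)) \<le> d"
        using K[of l "N - l" "N' - l"] by (simp add: dist_norm)
    next
      fix l
      show "norm (T l (N - l) - T l (N' - l)) \<le> 2 * b l"
        using norm_triangle_ineq4[of "T l (N - l)" "T l (N' - l)"] T_bound[of l "N - l"] T_bound[of l "N' - l"]
        by linarith
    qed
    also have "\<dots> < e / 2 + 2 * (e / 4)"
    proof (rule add_le_less_mono)
      show "(\<Sum>l<L. d) \<le> e / 2" using e by (simp add: d_def field_simps)
      show "(\<Sum>l\<in>{L..<Q}. 2 * b l) < 2 * (e / 4)"
        using L[of Q] by (simp add: sum_distrib_left[symmetric])
    qed
    finally show "dist (\<Sum>l<N. T l (N - l)) (\<Sum>l<N'. T l (N' - l)) < e" by simp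
  qed
qed

lemma suminf_shift_le:
  fixes f :: "nat \<Rightarrow> real"
  assumes "summable f" and "\<And>n. 0 \<le> f n"
  shows "(\<Sum>n. f (n + k)) \<le> suminf f"
  using suminf_split_initial_segment[OF assms(1), of k] sum_nonneg[of "{..<k}" f] assms(2) by simp

definition diagonal :: "(nat \<Rightarrow> nat \<Rightarrow> real) \<Rightarrow> (nat \<Rightarrow> 'h::real_vector) \<Rightarrow> nat \<Rightarrow> nat \<Rightarrow> 'h" where
  "diagonal a u l k = a (k + l) k *\<^sub>R u (k + l)"

lemma
  fixes a :: "nat \<Rightarrow> nat \<Rightarrow> real" and u :: "nat \<Rightarrow> 'h::real_normed_vector"
  assumes C: "0 \<le> C" and \<alpha>: "1 < \<alpha>"
    and a: "\<And>n k. 1 \<le> k \<Longrightarrow> k \<le> n \<Longrightarrow> \<bar>a n k\<bar> \<le> C * real (n - k + 1) powr - \<alpha>"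
    and u: "summable (\<lambda>n. (norm (u (Suc n)))\<^sup>2)"
  shows summable_norm_diagonal_sq: "summable (\<lambda>k. (norm (diagonal a u l k))\<^sup>2)"
    and summable_sqrt_suminf_norm_diagonal_sq:
      "summable (\<lambda>l. sqrt (\<Sum>k. (norm (diagonal a u l (k + 1)))\<^sup>2))"
proof -
  define w where "w = diagonal a u"
  define B where "B l = C * (real l + 1) powr - \<alpha>" for l
  define U where "U = (\<Sum>n. (norm (u (Suc n)))\<^sup>2)"
  have B: "0 \<le> B l" for l using C by (simp add: B_def)
  have w_le: "(norm (w l k))\<^sup>2 \<le> (B l)\<^sup>2 * (norm (u (k + l)))\<^sup>2" if "1 \<le> k" for l k
  proof -
    have "\<bar>a (k + l) k\<bar> \<le> B l"
      using a[of k "k + l"] that by (simp add: B_def add.commute)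
    then have "(a (k + l) k)\<^sup>2 \<le> (B l)\<^sup>2"
      using power_mono[of "\<bar>a (k + l) k\<bar>" "B l" 2] by simp
    then show ?thesis
      by (simp add: w_def diagonal_def power_mult_distrib mult_right_mono)
  qed
  have u': "summable (\<lambda>n. (norm (u n))\<^sup>2)" using u by (subst summable_Suc_iff[symmetric])
  have w: "summable (\<lambda>k. (norm (w l k))\<^sup>2)" for l
  proof (rule summable_comparison_test'[where N=1])
    show "summable (\<lambda>k. (B l)\<^sup>2 * (norm (u (k + l)))\<^sup>2)"
      by (intro summable_mult summable_ignore_initial_segment u')
    show "norm ((norm (w l k))\<^sup>2) \<le> (B l)\<^sup>2 * (norm (u (k + l)))\<^sup>2" if "1 \<le> k" for k
      using w_le[OF that] by simp
  qed
  have tail_le: "sqrt (\<Sum>k. (norm (w l (k + 1)))\<^sup>2) \<le> B l * sqrt U" for l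
  proof -
    have u_l: "summable (\<lambda>k. (norm (u (Suc (k + l))))\<^sup>2)"
      using summable_ignore_initial_segment[OF u, of l] by simp
    have "(\<Sum>k. (norm (w l (k + 1)))\<^sup>2) \<le> (\<Sum>k. (B l)\<^sup>2 * (norm (u (Suc (k + l))))\<^sup>2)"
      using w_le[of "_ + 1" l] summable_ignore_initial_segment[OF w[of l], of 1] u_l
      by (intro suminf_le summable_mult) auto
    also have "\<dots> = (B l)\<^sup>2 * (\<Sum>k. (norm (u (Suc (k + l))))\<^sup>2)"
      by (rule suminf_mult[OF u_l])
    also have "\<dots> \<le> (B l)\<^sup>2 * U"
      unfolding U_def using suminf_shift_le[OF u, of l] by (intro mult_left_mono) auto
    finally have "sqrt (\<Sum>k. (norm (w l (k + 1)))\<^sup>2) \<le> sqrt ((B l)\<^sup>2 * U)"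
      by (rule real_sqrt_le_mono)
    then show ?thesis using B[of l] by (simp add: real_sqrt_mult)
  qed
  have "summable (\<lambda>l. real (Suc l) powr - \<alpha>)"
    using \<alpha> summable_Suc_iff[of "\<lambda>n. real n powr - \<alpha>"] by (simp add: summable_real_powr_iff)
  then have "summable (\<lambda>l. B l * sqrt U)"
    unfolding B_def by (intro summable_mult2 summable_mult) (simp add: add.commute)
  moreover have "norm (sqrt (\<Sum>k. (norm (w l (k + 1)))\<^sup>2)) \<le> B l * sqrt U" for l
    using suminf_nonneg[OF summable_ignore_initial_segment[OF w[of l], of 1]] tail_le[of l] by simp
  ultimately show "summable (\<lambda>l. sqrt (\<Sum>k. (norm (diagonal a u l (k + 1)))\<^sup>2))"
    unfolding w_def by (rule summable_comparison_test')
  show "summable (\<lambda>k. (norm (diagonal a u l k))\<^sup>2)"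
    using w unfolding w_def .
qed

section \<open>Kolmogorov's maximal inequality in a Hilbert space\<close>

lemma norm_sum_scaleR_eq_sqrt_inner:
  fixes w :: "'i \<Rightarrow> 'h::real_inner"
  shows "norm (\<Sum>k\<in>K. c k *\<^sub>R w k) = sqrt (\<Sum>i\<in>K. \<Sum>l\<in>K. c i * c l * inner (w i) (w l))"
  by (simp add: norm_eq_sqrt_inner inner_sum_left inner_sum_right sum_distrib_left mult_ac,
      subst sum.swap, simp add: mult_ac)

text \<open>Without second countability of \<open>'h\<close> a sum of measurable \<open>'h\<close>-valued functions need not be
  Borel measurable, but its norm is, by the Gram expansion above.\<close>
lemma borel_measurable_norm_sum_scaleR:
  fixes w :: "'i \<Rightarrow> 'h::real_inner"
  assumes "\<And>k. k \<in> K \<Longrightarrow> f k \<in> borel_measurable N"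
  shows "(\<lambda>x. norm (\<Sum>k\<in>K. f k x *\<^sub>R w k)) \<in> borel_measurable N"
proof -
  have "(\<lambda>x. \<Sum>i\<in>K. \<Sum>l\<in>K. f i x * f l x * inner (w i) (w l)) \<in> borel_measurable N"
    using assms by (intro borel_measurable_sum borel_measurable_times borel_measurable_const) auto
  from measurable_compose[OF this borel_measurable_sqrt] show ?thesis
    unfolding norm_sum_scaleR_eq_sqrt_inner .
qed

definition first_passage :: "(nat \<Rightarrow> 'a::linorder) \<Rightarrow> 'a \<Rightarrow> nat \<Rightarrow> nat \<Rightarrow> real" where
  "first_passage s t m j = of_bool (t < s j \<and> (\<forall>i\<in>{m..<j}. s i \<le> t))"

lemma first_passage_cong:
  "(\<And>i. i \<le> j \<Longrightarrow> s i = s' i) \<Longrightarrow> first_passage s t m j = first_passage s' t m j"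
  by (simp add: first_passage_def)

lemma sum_first_passage:
  "(\<Sum>j\<in>{m..n}. first_passage s t m j) = of_bool (\<exists>j\<in>{m..n}. t < s j)"
proof (cases "\<exists>j\<in>{m..n}. t < s j")
  case True
  define j0 where "j0 = (LEAST j. j \<in> {m..n} \<and> t < s j)"
  have "j0 \<in> {m..n} \<and> t < s j0"
    unfolding j0_def by (rule LeastI_ex) (use True in blast)
  then have j0: "j0 \<in> {m..n}" "t < s j0" by auto
  have below: "s i \<le> t" if "i \<in> {m..<j0}" for i
  proof -
    have "i < j0" "i \<in> {m..n}" using that j0(1) by auto
    then show ?thesis
      using not_less_Least[of i "\<lambda>j. j \<in> {m..n} \<and> t < s j"] unfolding j0_def[symmetric]
      by (simp add: not_less)
  qed
  have "first_passage s t m j = (if j = j0 then 1 else 0)" if "j \<in> {m..n}" for j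
  proof (cases j j0 rule: linorder_cases)
    case less
    then show ?thesis using below[of j] that by (simp add: first_passage_def)
  next
    case equal
    then show ?thesis using j0 below by (simp add: first_passage_def)
  next
    case greater
    then have "j0 \<in> {m..<j}" using j0(1) by simp
    then show ?thesis using j0(2) greater by (auto simp: first_passage_def not_le)
  qed
  then have "(\<Sum>j\<in>{m..n}. first_passage s t m j) = (\<Sum>j\<in>{m..n}. if j = j0 then 1 else 0)"
    by (rule sum.cong[OF refl])
  also have "\<dots> = 1"
    using j0(1) by (simp add: sum.delta)
  finally show ?thesis using True by simp
next
  case False
  then have "first_passage s t m j = 0" if "j \<in> {m..n}" for j
    using that by (auto simp: first_passage_def)
  then show ?thesis using False by simp
qed

definition psum :: "(nat \<Rightarrow> 'a \<Rightarrow> real) \<Rightarrow> (nat \<Rightarrow> 'h::real_vector) \<Rightarrow> nat \<Rightarrow> nat \<Rightarrow> 'a \<Rightarrow> 'h"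
  where "psum Z w m j x = (\<Sum>k\<in>{m..<j}. Z k x *\<^sub>R w k)"

lemma psum_split: "m \<le> p \<Longrightarrow> p \<le> j \<Longrightarrow> psum Z w m j x = psum Z w m p x + psum Z w p j x"
  by (simp add: psum_def sum.atLeastLessThan_concat)

lemma psum_eq_0: "j \<le> m \<Longrightarrow> psum Z w m j x = 0"
  by (simp add: psum_def)

lemma first_passage_norm_psum_restrict:
  fixes w :: "nat \<Rightarrow> 'h::real_inner"
  obtains F where "F \<in> borel_measurable (PiM {m..<j} (\<lambda>_. borel))" "\<And>\<omega>. 0 \<le> F \<omega>" "\<And>\<omega>. F \<omega> \<le> 1"
    and "\<And>x. first_passage (\<lambda>i. norm (psum Z w m i x)) t m j = F (restrict (\<lambda>k. Z k x) {m..<j})"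
proof -
  define F where "F \<omega> = first_passage (\<lambda>i. norm (\<Sum>k\<in>{m..<i}. \<omega> k *\<^sub>R w k)) t m j" for \<omega>
  have [measurable]: "(\<lambda>\<omega>. norm (\<Sum>k\<in>{m..<i}. \<omega> k *\<^sub>R w k)) \<in> borel_measurable (PiM {m..<j} (\<lambda>_. borel))"
    if "i \<le> j" for i
    by (rule borel_measurable_norm_sum_scaleR) (use that in auto)
  have "F \<in> borel_measurable (PiM {m..<j} (\<lambda>_. borel))"
    unfolding F_def first_passage_def by measurable
  moreover have "first_passage (\<lambda>i. norm (psum Z w m i x)) t m j = F (restrict (\<lambda>k. Z k x) {m..<j})" for x
    unfolding F_def psum_def by (intro first_passage_cong arg_cong[where f=norm] sum.cong) auto
  moreover have "0 \<le> F \<omega>" "F \<omega> \<le> 1" for \<omega>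
    by (simp_all add: F_def first_passage_def)
  ultimately show ?thesis
    using that by blast
qed

locale standardized_indep_vars = prob_space M for M :: "'a measure" +
  fixes Z :: "nat \<Rightarrow> 'a \<Rightarrow> real" and I :: "nat set"
  assumes indep: "indep_vars (\<lambda>_. borel) Z I"
    and integrable_Z_sq: "\<And>k. k \<in> I \<Longrightarrow> integrable M (\<lambda>x. (Z k x)\<^sup>2)"
    and expectation_Z: "\<And>k. k \<in> I \<Longrightarrow> expectation (Z k) = 0"
    and expectation_Z_sq: "\<And>k. k \<in> I \<Longrightarrow> expectation (\<lambda>x. (Z k x)\<^sup>2) = 1"
begin

lemma borel_measurable_Z[measurable]: "k \<in> I \<Longrightarrow> Z k \<in> borel_measurable M"
  using indep unfolding indep_vars_def by auto

lemma integrable_Z: "k \<in> I \<Longrightarrow> integrable M (Z k)"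
  using square_integrable_imp_integrable[OF borel_measurable_Z integrable_Z_sq] by auto

lemma integrable_mult_Z_Z:
  assumes "i \<in> I" "l \<in> I" and [measurable]: "g \<in> borel_measurable M" and g: "\<And>x. \<bar>g x\<bar> \<le> 1"
  shows "integrable M (\<lambda>x. g x * Z i x * Z l x)"
proof (rule Bochner_Integration.integrable_bound[where f="\<lambda>x. (Z i x)\<^sup>2 + (Z l x)\<^sup>2"])
  show "integrable M (\<lambda>x. (Z i x)\<^sup>2 + (Z l x)\<^sup>2)"
    using integrable_Z_sq assms by auto
  show "AE x in M. norm (g x * Z i x * Z l x) \<le> norm ((Z i x)\<^sup>2 + (Z l x)\<^sup>2)"
  proof (intro AE_I2)
    fix x
    have "\<bar>g x * Z i x * Z l x\<bar> \<le> \<bar>Z i x\<bar> * \<bar>Z l x\<bar>"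
      using g[of x] by (simp add: abs_mult mult.assoc mult_left_le_one_le)
    also have "\<dots> \<le> (Z i x)\<^sup>2 + (Z l x)\<^sup>2"
      using sum_squares_bound[of "\<bar>Z i x\<bar>" "\<bar>Z l x\<bar>"]
        mult_nonneg_nonneg[OF abs_ge_zero abs_ge_zero, of "Z i x" "Z l x"]
      unfolding power2_abs by linarith
    finally show "norm (g x * Z i x * Z l x) \<le> norm ((Z i x)\<^sup>2 + (Z l x)\<^sup>2)" by simp
  qed
qed (use assms in measurable)

lemma expectation_mult_Z_Z_eq_0:
  assumes J: "finite J" "J \<subseteq> I" "i \<in> J" "l \<in> I" "l \<notin> J"
    and f[measurable]: "f \<in> borel_measurable (PiM J (\<lambda>_. borel))" and f1: "\<And>\<omega>. \<bar>f \<omega>\<bar> \<le> 1"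
  shows "expectation (\<lambda>x. f (restrict (\<lambda>k. Z k x) J) * Z i x * Z l x) = 0"
proof -
  have "indep_var (PiM J (\<lambda>_. borel)) (\<lambda>x. restrict (\<lambda>k. Z k x) J)
      (PiM {l} (\<lambda>_. borel)) (\<lambda>x. restrict (\<lambda>k. Z k x) {l})"
    using J by (intro indep_var_restrict[OF indep]) auto
  then have "indep_var borel ((\<lambda>\<omega>. f \<omega> * \<omega> i) \<circ> (\<lambda>x. restrict (\<lambda>k. Z k x) J))
      borel ((\<lambda>\<omega>. \<omega> l) \<circ> (\<lambda>x. restrict (\<lambda>k. Z k x) {l}))"
    by (rule indep_var_compose) (use J in measurable)
  moreover have "(\<lambda>\<omega>. f \<omega> * \<omega> i) \<circ> (\<lambda>x. restrict (\<lambda>k. Z k x) J)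
      = (\<lambda>x. f (restrict (\<lambda>k. Z k x) J) * Z i x)"
    using J by (auto simp: fun_eq_iff)
  moreover have "(\<lambda>\<omega>. \<omega> l) \<circ> (\<lambda>x. restrict (\<lambda>k. Z k x) {l}) = Z l"
    by (auto simp: fun_eq_iff)
  ultimately have indep_fZ: "indep_var borel (\<lambda>x. f (restrict (\<lambda>k. Z k x) J) * Z i x) borel (Z l)"
    by simp
  have restrict_Z: "(\<lambda>x. restrict (\<lambda>k. Z k x) J) \<in> measurable M (PiM J (\<lambda>_. borel))"
    using J by (intro measurable_restrict) auto
  have "integrable M (\<lambda>x. f (restrict (\<lambda>k. Z k x) J) * Z i x)"
  proof (rule Bochner_Integration.integrable_bound[OF integrable_Z])
    show "(\<lambda>x. f (restrict (\<lambda>k. Z k x) J) * Z i x) \<in> borel_measurable M"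
      using J by (intro borel_measurable_times measurable_compose[OF restrict_Z f]) auto
    show "AE x in M. norm (f (restrict (\<lambda>k. Z k x) J) * Z i x) \<le> norm (Z i x)"
      using f1 by (intro AE_I2) (auto simp: abs_mult intro!: mult_left_le_one_le)
  qed (use J in auto)
  then have "expectation (\<lambda>x. f (restrict (\<lambda>k. Z k x) J) * Z i x * Z l x)
     = expectation (\<lambda>x. f (restrict (\<lambda>k. Z k x) J) * Z i x) * expectation (Z l)"
    by (rule indep_var_lebesgue_integral[OF indep_fZ _ integrable_Z[OF J(4)]])
  then show ?thesis using expectation_Z[OF J(4)] by simp
qed

lemma expectation_mult_Z_Z:
  assumes "i \<in> I" "l \<in> I"
  shows "expectation (\<lambda>x. Z i x * Z l x) = (if i = l then 1 else 0)"
proof (cases "i = l")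
  case True
  then show ?thesis using expectation_Z_sq[of i] assms by (simp add: power2_eq_square)
next
  case False
  have "expectation (\<lambda>x. (\<lambda>_. 1::real) (restrict (\<lambda>k. Z k x) {i}) * Z i x * Z l x) = 0"
    using False assms by (intro expectation_mult_Z_Z_eq_0[where J="{i}"]) auto
  then show ?thesis using False by simp
qed

lemma
  fixes v v' :: "nat \<Rightarrow> 'h::real_inner"
  assumes K: "finite K" "finite K'" "K \<subseteq> I" "K' \<subseteq> I"
    and [measurable]: "g \<in> borel_measurable M" and g: "\<And>x. \<bar>g x\<bar> \<le> 1"
  shows integrable_inner_sum_Z:
      "integrable M (\<lambda>x. g x * inner (\<Sum>i\<in>K. Z i x *\<^sub>R v i) (\<Sum>l\<in>K'. Z l x *\<^sub>R v' l))"
    and expectation_inner_sum_Z: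
      "expectation (\<lambda>x. g x * inner (\<Sum>i\<in>K. Z i x *\<^sub>R v i) (\<Sum>l\<in>K'. Z l x *\<^sub>R v' l))
       = (\<Sum>i\<in>K. \<Sum>l\<in>K'. inner (v i) (v' l) * expectation (\<lambda>x. g x * Z i x * Z l x))"
proof -
  have eq: "(\<lambda>x. g x * inner (\<Sum>i\<in>K. Z i x *\<^sub>R v i) (\<Sum>l\<in>K'. Z l x *\<^sub>R v' l))
     = (\<lambda>x. \<Sum>i\<in>K. \<Sum>l\<in>K'. inner (v i) (v' l) * (g x * Z i x * Z l x))"
    by (simp add: fun_eq_iff inner_sum_left inner_sum_right sum_distrib_left mult_ac,
        subst sum.swap, simp add: mult_ac)
  have int: "integrable M (\<lambda>x. g x * Z i x * Z l x)" if "i \<in> K" "l \<in> K'" for i l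
    using K that by (intro integrable_mult_Z_Z g) auto
  show "integrable M (\<lambda>x. g x * inner (\<Sum>i\<in>K. Z i x *\<^sub>R v i) (\<Sum>l\<in>K'. Z l x *\<^sub>R v' l))"
    unfolding eq using int by auto
  show "expectation (\<lambda>x. g x * inner (\<Sum>i\<in>K. Z i x *\<^sub>R v i) (\<Sum>l\<in>K'. Z l x *\<^sub>R v' l))
       = (\<Sum>i\<in>K. \<Sum>l\<in>K'. inner (v i) (v' l) * expectation (\<lambda>x. g x * Z i x * Z l x))"
    unfolding eq using int
    by (subst Bochner_Integration.integral_sum,
        fastforce intro!: Bochner_Integration.integrable_sum Bochner_Integration.integrable_mult_right,
        intro sum.cong refl, subst Bochner_Integration.integral_sum, auto)
qed

lemma
  fixes w :: "nat \<Rightarrow> 'h::real_inner"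
  assumes K: "finite K" "K \<subseteq> I"
  shows integrable_norm_sum_Z_sq: "integrable M (\<lambda>x. (norm (\<Sum>k\<in>K. Z k x *\<^sub>R w k))\<^sup>2)"
    and expectation_norm_sum_Z_sq:
      "expectation (\<lambda>x. (norm (\<Sum>k\<in>K. Z k x *\<^sub>R w k))\<^sup>2) = (\<Sum>k\<in>K. (norm (w k))\<^sup>2)"
proof -
  have eq: "(\<lambda>x. (norm (\<Sum>k\<in>K. Z k x *\<^sub>R w k))\<^sup>2) =
      (\<lambda>x. 1 * inner (\<Sum>k\<in>K. Z k x *\<^sub>R w k) (\<Sum>k\<in>K. Z k x *\<^sub>R w k))"
    by (simp add: power2_norm_eq_inner)
  show "integrable M (\<lambda>x. (norm (\<Sum>k\<in>K. Z k x *\<^sub>R w k))\<^sup>2)"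
    unfolding eq by (rule integrable_inner_sum_Z) (use K in auto)
  have "(\<Sum>l\<in>K. inner (w k) (w l) * expectation (\<lambda>x. Z k x * Z l x))
      = (\<Sum>l\<in>K. if k = l then inner (w k) (w l) else 0)" if "k \<in> K" for k
    using that K by (intro sum.cong) (auto simp: expectation_mult_Z_Z subset_iff)
  then have diag: "(\<Sum>l\<in>K. inner (w k) (w l) * expectation (\<lambda>x. 1 * Z k x * Z l x))
      = (norm (w k))\<^sup>2" if "k \<in> K" for k
    using that K by (simp add: power2_norm_eq_inner)
  have "expectation (\<lambda>x. 1 * inner (\<Sum>k\<in>K. Z k x *\<^sub>R w k) (\<Sum>k\<in>K. Z k x *\<^sub>R w k))
      = (\<Sum>i\<in>K. \<Sum>l\<in>K. inner (w i) (w l) * expectation (\<lambda>x. 1 * Z i x * Z l x))"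
    by (rule expectation_inner_sum_Z) (use K in auto)
  also have "\<dots> = (\<Sum>k\<in>K. (norm (w k))\<^sup>2)"
    using diag by (rule sum.cong[OF refl])
  finally show "expectation (\<lambda>x. (norm (\<Sum>k\<in>K. Z k x *\<^sub>R w k))\<^sup>2) = (\<Sum>k\<in>K. (norm (w k))\<^sup>2)"
    unfolding eq .
qed

lemma borel_measurable_norm_psum:
  fixes w :: "nat \<Rightarrow> 'h::real_inner"
  shows "{m..<j} \<subseteq> I \<Longrightarrow> (\<lambda>x. norm (psum Z w m j x)) \<in> borel_measurable M"
  unfolding psum_def by (rule borel_measurable_norm_sum_scaleR) auto

text \<open>The increment \<open>psum Z w j n\<close> is orthogonal to every bounded function of
  \<open>Z\<^sub>m, \<dots>, Z\<^sub>j\<^sub>-\<^sub>1\<close>; this is the submartingale property of \<open>\<parallel>psum Z w m j\<parallel>\<^sup>2\<close>.\<close>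
lemma
  fixes w :: "nat \<Rightarrow> 'h::real_inner"
  assumes I: "{m..<n} \<subseteq> I" and j: "m \<le> j" "j \<le> n"
    and f[measurable]: "f \<in> borel_measurable (PiM {m..<j} (\<lambda>_. borel))"
    and f01: "\<And>\<omega>. 0 \<le> f \<omega>" "\<And>\<omega>. f \<omega> \<le> 1"
  shows integrable_mult_norm_psum_sq:
      "integrable M (\<lambda>x. f (restrict (\<lambda>k. Z k x) {m..<j}) * (norm (psum Z w m n x))\<^sup>2)"
    and expectation_mult_norm_psum_sq_mono:
      "expectation (\<lambda>x. f (restrict (\<lambda>k. Z k x) {m..<j}) * (norm (psum Z w m j x))\<^sup>2)
       \<le> expectation (\<lambda>x. f (restrict (\<lambda>k. Z k x) {m..<j}) * (norm (psum Z w m n x))\<^sup>2)"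
proof -
  define g where "g x = f (restrict (\<lambda>k. Z k x) {m..<j})" for x
  have "(\<lambda>x. restrict (\<lambda>k. Z k x) {m..<j}) \<in> measurable M (PiM {m..<j} (\<lambda>_. borel))"
    using I j by (intro measurable_restrict) (auto simp: subset_iff)
  from measurable_compose[OF this f] have g_meas[measurable]: "g \<in> borel_measurable M"
    unfolding g_def .
  have g1: "\<bar>g x\<bar> \<le> 1" for x using f01 by (simp add: g_def)
  have int_inner: "integrable M (\<lambda>x. g x * inner (psum Z w p q x) (psum Z w p' q' x))"
    if "{p..<q} \<subseteq> I" "{p'..<q'} \<subseteq> I" for p q p' q'
    unfolding psum_def by (rule integrable_inner_sum_Z) (use that g1 in auto)
  have sub: "{m..<j} \<subseteq> I" "{j..<n} \<subseteq> I" using I j by auto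
  show int_n: "integrable M (\<lambda>x. g x * (norm (psum Z w m n x))\<^sup>2)"
    unfolding power2_norm_eq_inner using int_inner[OF I I] .
  have int_j: "integrable M (\<lambda>x. g x * (norm (psum Z w m j x))\<^sup>2)"
    unfolding power2_norm_eq_inner using int_inner[OF sub(1) sub(1)] .
  have int_cross: "integrable M (\<lambda>x. g x * inner (psum Z w m j x) (psum Z w j n x))"
    using int_inner[OF sub] .
  have "expectation (\<lambda>x. g x * Z i x * Z l x) = 0" if "i \<in> {m..<j}" "l \<in> {j..<n}" for i l
    unfolding g_def using that sub f01 by (intro expectation_mult_Z_Z_eq_0) auto
  then have cross: "expectation (\<lambda>x. g x * inner (psum Z w m j x) (psum Z w j n x)) = 0"
    unfolding psum_def using sub g1 by (subst expectation_inner_sum_Z) auto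
  have pointwise: "g x * (norm (psum Z w m j x))\<^sup>2 + 2 * (g x * inner (psum Z w m j x) (psum Z w j n x))
      \<le> g x * (norm (psum Z w m n x))\<^sup>2" for x
  proof -
    have "(norm (psum Z w m n x))\<^sup>2 = (norm (psum Z w m j x))\<^sup>2
        + 2 * inner (psum Z w m j x) (psum Z w j n x) + (norm (psum Z w j n x))\<^sup>2"
      using psum_split[OF j, of Z w x]
      by (simp add: power2_norm_eq_inner inner_add_left inner_add_right inner_commute)
    then show ?thesis
      using mult_left_mono[of _ _ "g x"] f01 by (simp add: g_def algebra_simps)
  qed
  have "expectation (\<lambda>x. g x * (norm (psum Z w m j x))\<^sup>2)
      = expectation (\<lambda>x. g x * (norm (psum Z w m j x))\<^sup>2
          + 2 * (g x * inner (psum Z w m j x) (psum Z w j n x)))"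
    using int_j int_cross cross by simp
  also have "\<dots> \<le> expectation (\<lambda>x. g x * (norm (psum Z w m n x))\<^sup>2)"
    using int_j int_cross int_n pointwise by (intro integral_mono) auto
  finally show "expectation (\<lambda>x. g x * (norm (psum Z w m j x))\<^sup>2)
      \<le> expectation (\<lambda>x. g x * (norm (psum Z w m n x))\<^sup>2)" .
qed

lemma
  fixes w :: "nat \<Rightarrow> 'h::real_inner"
  assumes I: "{m..<n} \<subseteq> I" and j: "j \<in> {m..n}" and t: "0 \<le> t"
  shows integrable_first_passage_norm_psum:
      "integrable M (\<lambda>x. first_passage (\<lambda>i. norm (psum Z w m i x)) t m j)"
    and integrable_first_passage_mult_norm_psum_sq:
      "integrable M (\<lambda>x. first_passage (\<lambda>i. norm (psum Z w m i x)) t m j * (norm (psum Z w m n x))\<^sup>2)"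
    and expectation_first_passage_le:
      "t\<^sup>2 * expectation (\<lambda>x. first_passage (\<lambda>i. norm (psum Z w m i x)) t m j)
        \<le> expectation (\<lambda>x. first_passage (\<lambda>i. norm (psum Z w m i x)) t m j * (norm (psum Z w m n x))\<^sup>2)"
proof -
  obtain F where F: "F \<in> borel_measurable (PiM {m..<j} (\<lambda>_. borel))" "\<And>\<omega>. 0 \<le> F \<omega>" "\<And>\<omega>. F \<omega> \<le> 1"
    and first: "\<And>x. first_passage (\<lambda>i. norm (psum Z w m i x)) t m j = F (restrict (\<lambda>k. Z k x) {m..<j})"
    using first_passage_norm_psum_restrict[where Z=Z and w=w and t=t and m=m and j=j] by blast
  have sub: "{m..<j} \<subseteq> I" "m \<le> j" "j \<le> n" using I j by auto
  have "(\<lambda>x. restrict (\<lambda>k. Z k x) {m..<j}) \<in> measurable M (PiM {m..<j} (\<lambda>_. borel))"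
    using sub by (intro measurable_restrict) (auto simp: subset_iff)
  from measurable_compose[OF this F(1)]
  show int_first: "integrable M (\<lambda>x. first_passage (\<lambda>i. norm (psum Z w m i x)) t m j)"
    unfolding first using F(2,3) by (intro integrable_const_bound[where B=1] AE_I2) auto
  show "integrable M (\<lambda>x. first_passage (\<lambda>i. norm (psum Z w m i x)) t m j * (norm (psum Z w m n x))\<^sup>2)"
    unfolding first by (rule integrable_mult_norm_psum_sq[OF I sub(2,3) F])
  have int_j: "integrable M (\<lambda>x. first_passage (\<lambda>i. norm (psum Z w m i x)) t m j * (norm (psum Z w m j x))\<^sup>2)"
    unfolding first by (rule integrable_mult_norm_psum_sq[OF sub(1,2) order_refl F])
  have "t\<^sup>2 * first_passage (\<lambda>i. norm (psum Z w m i x)) t m j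
      \<le> first_passage (\<lambda>i. norm (psum Z w m i x)) t m j * (norm (psum Z w m j x))\<^sup>2" for x
    using t by (auto simp: first_passage_def intro: power_strict_mono[THEN less_imp_le])
  then have "t\<^sup>2 * expectation (\<lambda>x. first_passage (\<lambda>i. norm (psum Z w m i x)) t m j)
      \<le> expectation (\<lambda>x. first_passage (\<lambda>i. norm (psum Z w m i x)) t m j * (norm (psum Z w m j x))\<^sup>2)"
    using int_first int_j by (subst integral_mult_right_zero[symmetric]) (intro integral_mono, auto)
  also have "\<dots> \<le> expectation (\<lambda>x. first_passage (\<lambda>i. norm (psum Z w m i x)) t m j * (norm (psum Z w m n x))\<^sup>2)"
    unfolding first by (rule expectation_mult_norm_psum_sq_mono[OF I sub(2,3) F])
  finally show "t\<^sup>2 * expectation (\<lambda>x. first_passage (\<lambda>i. norm (psum Z w m i x)) t m j)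
      \<le> expectation (\<lambda>x. first_passage (\<lambda>i. norm (psum Z w m i x)) t m j * (norm (psum Z w m n x))\<^sup>2)" .
qed

theorem kolmogorov_maximal_inequality:
  fixes w :: "nat \<Rightarrow> 'h::real_inner"
  assumes I: "{m..<n} \<subseteq> I" and t: "0 < t"
  shows "prob {x\<in>space M. \<exists>j\<in>{m..n}. t < norm (psum Z w m j x)}
    \<le> (\<Sum>k\<in>{m..<n}. (norm (w k))\<^sup>2) / t\<^sup>2"
proof -
  define first where "first j x = first_passage (\<lambda>i. norm (psum Z w m i x)) t m j" for j x
  define E where "E = {x\<in>space M. \<exists>j\<in>{m..n}. t < norm (psum Z w m j x)}"
  have sum_first: "(\<Sum>j\<in>{m..n}. first j x) = indicator E x" if "x \<in> space M" for x
    using that by (simp add: first_def sum_first_passage E_def indicator_def)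
  note first_lemmas = integrable_first_passage_norm_psum[OF I _ less_imp_le[OF t], of _ w]
    integrable_first_passage_mult_norm_psum_sq[OF I _ less_imp_le[OF t], of _ w]
    expectation_first_passage_le[OF I _ less_imp_le[OF t], of _ w]
  have indicator_E: "indicator E x * (norm (psum Z w m n x))\<^sup>2
      = (\<Sum>j\<in>{m..n}. first j x * (norm (psum Z w m n x))\<^sup>2)" if "x \<in> space M" for x
    using that by (simp add: sum_first sum_distrib_right[symmetric])
  have "E \<inter> space M = E" by (auto simp: E_def)
  then have "t\<^sup>2 * prob E = t\<^sup>2 * expectation (\<lambda>x. \<Sum>j\<in>{m..n}. first j x)"
    by (simp add: sum_first cong: Bochner_Integration.integral_cong)
  also have "\<dots> \<le> (\<Sum>j\<in>{m..n}. expectation (\<lambda>x. first j x * (norm (psum Z w m n x))\<^sup>2))"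
    using first_lemmas unfolding first_def
    by (subst Bochner_Integration.integral_sum) (auto simp: sum_distrib_left intro!: sum_mono)
  also have "\<dots> = expectation (\<lambda>x. indicator E x * (norm (psum Z w m n x))\<^sup>2)"
    using first_lemmas unfolding first_def[symmetric]
    by (subst Bochner_Integration.integral_sum[symmetric]) (auto simp: indicator_E cong: Bochner_Integration.integral_cong)
  also have "\<dots> \<le> expectation (\<lambda>x. (norm (psum Z w m n x))\<^sup>2)"
  proof (rule integral_mono)
    show "integrable M (\<lambda>x. indicator E x * (norm (psum Z w m n x))\<^sup>2)"
      using first_lemmas unfolding first_def[symmetric]
      by (subst Bochner_Integration.integrable_cong[OF refl indicator_E]) auto
    show "integrable M (\<lambda>x. (norm (psum Z w m n x))\<^sup>2)"
      unfolding psum_def using I by (rule integrable_norm_sum_Z_sq[OF finite_atLeastLessThan])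
  qed (simp add: indicator_def)
  also have "\<dots> = (\<Sum>k\<in>{m..<n}. (norm (w k))\<^sup>2)"
    unfolding psum_def using I by (simp add: expectation_norm_sum_Z_sq)
  finally show ?thesis using t unfolding E_def by (simp add: field_simps)
qed

end

section \<open>Almost sure convergence\<close>

lemma SUP_ennreal_eq_SUP_Max:
  fixes f :: "nat \<Rightarrow> real"
  assumes "\<And>j. j < m \<Longrightarrow> f j = 0"
  shows "(SUP j. ennreal (f j)) = (SUP n. ennreal (Max (f ` {m..m + n})))"
proof (rule antisym)
  show "(SUP j. ennreal (f j)) \<le> (SUP n. ennreal (Max (f ` {m..m + n})))"
  proof (rule SUP_least)
    fix j
    show "ennreal (f j) \<le> (SUP n. ennreal (Max (f ` {m..m + n})))"
    proof (cases "m \<le> j")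
      case True
      then have "ennreal (f j) \<le> ennreal (Max (f ` {m..m + j}))"
        by (intro ennreal_leI Max_ge) auto
      also have "\<dots> \<le> (SUP n. ennreal (Max (f ` {m..m + n})))" by (rule SUP_upper) simp
      finally show ?thesis .
    qed (simp add: assms)
  qed
  show "(SUP n. ennreal (Max (f ` {m..m + n}))) \<le> (SUP j. ennreal (f j))"
  proof (rule SUP_least)
    fix n
    have "Max (f ` {m..m + n}) \<in> f ` {m..m + n}" by (rule Max_in) auto
    then obtain j where "Max (f ` {m..m + n}) = f j" by blast
    then show "ennreal (Max (f ` {m..m + n})) \<le> (SUP j. ennreal (f j))"
      using SUP_upper[of j UNIV "\<lambda>j. ennreal (f j)"] by simp
  qed
qed

context standardized_indep_vars
begin

lemma nn_integral_Max_norm_psum_le: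
  fixes w :: "nat \<Rightarrow> 'h::real_inner"
  assumes I: "{m..<n} \<subseteq> I" and mn: "m \<le> n"
  shows "(\<integral>\<^sup>+x. ennreal (Max ((\<lambda>j. norm (psum Z w m j x)) ` {m..n})) \<partial>M)
    \<le> ennreal (5 * sqrt (\<Sum>k\<in>{m..<n}. (norm (w k))\<^sup>2))"
proof (cases "\<forall>k\<in>{m..<n}. w k = 0")
  case True
  then have "psum Z w m j x = 0" if "j \<in> {m..n}" for j x
    unfolding psum_def using that by (intro sum.neutral) auto
  then have "Max ((\<lambda>j. norm (psum Z w m j x)) ` {m..n}) = 0" for x
    using mn by (simp add: Max_eq_iff)
  then show ?thesis by simp
next
  case False
  let ?V = "\<Sum>k\<in>{m..<n}. (norm (w k))\<^sup>2"
  obtain k where "k \<in> {m..<n}" "w k \<noteq> 0" using False by blast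
  then have V: "0 < ?V" by (intro sum_pos2[of _ k]) auto
  show ?thesis
  proof (rule nn_integral_le_of_tail_bound[OF _ V])
    show "(\<lambda>x. Max ((\<lambda>j. norm (psum Z w m j x)) ` {m..n})) \<in> borel_measurable M"
      using I by (intro borel_measurable_Max borel_measurable_norm_psum) auto
    show "prob {x\<in>space M. s < Max ((\<lambda>j. norm (psum Z w m j x)) ` {m..n})} \<le> ?V / s\<^sup>2"
      if "0 < s" for s
    proof -
      have "(s < Max ((\<lambda>j. norm (psum Z w m j x)) ` {m..n}))
          \<longleftrightarrow> (\<exists>j\<in>{m..n}. s < norm (psum Z w m j x))" for x
        using mn by (subst Max_gr_iff) auto
      then show ?thesis using kolmogorov_maximal_inequality[OF I that, of w] by simp
    qed
  qed
qed

lemma nn_integral_SUP_norm_psum_le: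
  fixes w :: "nat \<Rightarrow> 'h::real_inner"
  assumes I: "{m..} \<subseteq> I" and w: "summable (\<lambda>k. (norm (w k))\<^sup>2)"
  shows "(\<integral>\<^sup>+x. (SUP j. ennreal (norm (psum Z w m j x))) \<partial>M)
    \<le> ennreal (5 * sqrt (\<Sum>k. (norm (w (k + m)))\<^sup>2))"
proof -
  define Y where "Y n x = ennreal (Max ((\<lambda>j. norm (psum Z w m j x)) ` {m..m+n}))" for n x
  have SUP_eq: "(SUP j. ennreal (norm (psum Z w m j x))) = (SUP n. Y n x)" for x
    unfolding Y_def by (rule SUP_ennreal_eq_SUP_Max) (simp add: psum_eq_0)
  have "incseq Y"
    by (intro incseq_SucI le_funI) (auto simp: Y_def intro!: ennreal_leI Max_mono)
  moreover have "Y n \<in> borel_measurable M" for n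
  proof -
    have "(\<lambda>x. Max ((\<lambda>j. norm (psum Z w m j x)) ` {m..m+n})) \<in> borel_measurable M"
      using I by (intro borel_measurable_Max borel_measurable_norm_psum) auto
    then show ?thesis unfolding Y_def by measurable
  qed
  ultimately have "(\<integral>\<^sup>+x. (SUP j. ennreal (norm (psum Z w m j x))) \<partial>M) = (SUP n. integral\<^sup>N M (Y n))"
    unfolding SUP_eq by (rule nn_integral_monotone_convergence_SUP)
  also have "\<dots> \<le> ennreal (5 * sqrt (\<Sum>k. (norm (w (k + m)))\<^sup>2))"
  proof (rule SUP_least)
    fix n
    have "integral\<^sup>N M (Y n) \<le> ennreal (5 * sqrt (\<Sum>k\<in>{m..<m+n}. (norm (w k))\<^sup>2))"
      unfolding Y_def by (rule nn_integral_Max_norm_psum_le) (use I in auto)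
    also have "(\<Sum>k\<in>{m..<m+n}. (norm (w k))\<^sup>2) = (\<Sum>k<n. (norm (w (k + m)))\<^sup>2)"
      by (induct n) (auto simp: add.commute)
    also have "\<dots> \<le> (\<Sum>k. (norm (w (k + m)))\<^sup>2)"
      by (rule sum_le_suminf[OF summable_ignore_initial_segment[OF w]]) auto
    finally show "integral\<^sup>N M (Y n) \<le> ennreal (5 * sqrt (\<Sum>k. (norm (w (k + m)))\<^sup>2))"
      by (simp add: ennreal_leI)
  qed
  finally show ?thesis .
qed

lemma AE_INF_SUP_norm_psum_eq_0:
  fixes w :: "nat \<Rightarrow> 'h::real_inner"
  assumes I: "{m..} \<subseteq> I" and w: "summable (\<lambda>k. (norm (w k))\<^sup>2)"
  shows "AE x in M. (INF p. SUP j. ennreal (norm (psum Z w (m + p) j x))) = 0"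
proof -
  have [measurable]: "(\<lambda>x. ennreal (norm (psum Z w (m + p) j x))) \<in> borel_measurable M" for p j
    using borel_measurable_norm_psum[of "m + p" j w] I by (simp add: subset_iff)
  have "(\<integral>\<^sup>+x. (INF p. SUP j. ennreal (norm (psum Z w (m + p) j x))) \<partial>M) \<le> 0 + ennreal e"
    if e: "0 < e" for e
  proof -
    obtain p where "\<forall>n\<ge>p. norm (\<Sum>k. (norm (w (k + n)))\<^sup>2) < (e / 5)\<^sup>2"
      using suminf_exist_split[of "(e / 5)\<^sup>2" "\<lambda>k. (norm (w k))\<^sup>2"] e w by auto
    then have p: "norm (\<Sum>k. (norm (w (k + (m + p))))\<^sup>2) < (e / 5)\<^sup>2" by simp
    then have "sqrt (\<Sum>k. (norm (w (k + (m + p))))\<^sup>2) < sqrt ((e / 5)\<^sup>2)"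
      by (intro real_sqrt_less_mono) simp
    then have small: "5 * sqrt (\<Sum>k. (norm (w (k + (m + p))))\<^sup>2) \<le> e"
      using e by simp
    have "(\<integral>\<^sup>+x. (INF p. SUP j. ennreal (norm (psum Z w (m + p) j x))) \<partial>M)
        \<le> (\<integral>\<^sup>+x. (SUP j. ennreal (norm (psum Z w (m + p) j x))) \<partial>M)"
      by (intro nn_integral_mono INF_lower) auto
    also have "\<dots> \<le> ennreal (5 * sqrt (\<Sum>k. (norm (w (k + (m + p))))\<^sup>2))"
      by (rule nn_integral_SUP_norm_psum_le) (use I w in auto)
    also have "\<dots> \<le> ennreal e" using small by (rule ennreal_leI)
    finally show ?thesis by simp
  qed
  then have "(\<integral>\<^sup>+x. (INF p. SUP j. ennreal (norm (psum Z w (m + p) j x))) \<partial>M) = 0"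
    using ennreal_le_epsilon by (metis le_zero_eq)
  then show ?thesis by (subst (asm) nn_integral_0_iff_AE) auto
qed

lemma AE_convergent_psum:
  fixes w :: "nat \<Rightarrow> 'h::{real_inner, complete_space}"
  assumes I: "{m..} \<subseteq> I" and w: "summable (\<lambda>k. (norm (w k))\<^sup>2)"
  shows "AE x in M. convergent (\<lambda>j. psum Z w m j x)"
  using AE_INF_SUP_norm_psum_eq_0[OF assms]
proof eventually_elim
  case (elim x)
  show "convergent (\<lambda>j. psum Z w m j x)"
  proof (rule Cauchy_convergent, rule metric_CauchyI)
    fix e :: real assume e: "0 < e"
    then have "(INF p. SUP j. ennreal (norm (psum Z w (m + p) j x))) < ennreal (e / 2)"
      using elim by simp
    then obtain p where p: "(SUP j. ennreal (norm (psum Z w (m + p) j x))) < ennreal (e / 2)"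
      by (auto simp: INF_less_iff)
    have tail: "norm (psum Z w (m + p) j x) < e / 2" for j
      using le_less_trans[OF SUP_upper[OF UNIV_I] p] e by (simp add: ennreal_less_iff)
    show "\<exists>N. \<forall>i\<ge>N. \<forall>j\<ge>N. dist (psum Z w m i x) (psum Z w m j x) < e"
    proof (intro exI allI impI)
      fix i j assume "m + p \<le> i" "m + p \<le> j"
      then have "dist (psum Z w m i x) (psum Z w m j x)
          = norm (psum Z w (m + p) i x - psum Z w (m + p) j x)"
        using psum_split[of m "m + p" i Z w x] psum_split[of m "m + p" j Z w x] by (simp add: dist_norm)
      also have "\<dots> < e"
        using norm_triangle_ineq4[of "psum Z w (m + p) i x" "psum Z w (m + p) j x"] tail[of i] tail[of j]
        by simp
      finally show "dist (psum Z w m i x) (psum Z w m j x) < e" .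
    qed
  qed
qed

lemma AE_suminf_SUP_norm_psum_finite:
  fixes w :: "nat \<Rightarrow> nat \<Rightarrow> 'h::real_inner"
  assumes I: "{1..} \<subseteq> I" and w: "\<And>l. summable (\<lambda>k. (norm (w l k))\<^sup>2)"
    and w_tail: "summable (\<lambda>l. sqrt (\<Sum>k. (norm (w l (k + 1)))\<^sup>2))"
  shows "AE x in M. (\<Sum>l. SUP j. ennreal (norm (psum Z (w l) 1 j x))) \<noteq> \<infinity>"
proof -
  have [measurable]: "(\<lambda>x. SUP j. ennreal (norm (psum Z (w l) 1 j x))) \<in> borel_measurable M" for l
  proof -
    have "(\<lambda>x. norm (psum Z (w l) 1 j x)) \<in> borel_measurable M" for j
      using I by (intro borel_measurable_norm_psum) auto
    then show ?thesis by measurable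
  qed
  have "(\<integral>\<^sup>+x. (\<Sum>l. SUP j. ennreal (norm (psum Z (w l) 1 j x))) \<partial>M)
      = (\<Sum>l. \<integral>\<^sup>+x. (SUP j. ennreal (norm (psum Z (w l) 1 j x))) \<partial>M)"
    by (rule nn_integral_suminf) measurable
  also have "\<dots> \<le> (\<Sum>l. ennreal (5 * sqrt (\<Sum>k. (norm (w l (k + 1)))\<^sup>2)))"
    using I w by (intro suminf_le summableI nn_integral_SUP_norm_psum_le) auto
  also have "\<dots> = ennreal (\<Sum>l. 5 * sqrt (\<Sum>k. (norm (w l (k + 1)))\<^sup>2))"
  proof (intro suminf_ennreal2 summable_mult w_tail)
    show "0 \<le> 5 * sqrt (\<Sum>k. (norm (w l (k + 1)))\<^sup>2)" for l
      using suminf_nonneg[OF summable_ignore_initial_segment[OF w, of l 1]] by simp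
  qed
  finally have "(\<integral>\<^sup>+x. (\<Sum>l. SUP j. ennreal (norm (psum Z (w l) 1 j x))) \<partial>M) \<noteq> \<infinity>"
    by (auto simp: top_unique)
  then show ?thesis by (intro nn_integral_PInf_AE) measurable
qed

lemma AE_convergent_diagonal_psum:
  fixes w :: "nat \<Rightarrow> nat \<Rightarrow> 'h::{real_inner, complete_space}"
  assumes I: "{1..} \<subseteq> I" and w: "\<And>l. summable (\<lambda>k. (norm (w l k))\<^sup>2)"
    and w_tail: "summable (\<lambda>l. sqrt (\<Sum>k. (norm (w l (k + 1)))\<^sup>2))"
  shows "AE x in M. convergent (\<lambda>N. \<Sum>l<N. psum Z (w l) 1 (N - l + 1) x)"
proof -
  have "AE x in M. \<forall>l. convergent (\<lambda>j. psum Z (w l) 1 j x)"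
    unfolding AE_all_countable using I w by (intro allI AE_convergent_psum) auto
  with AE_suminf_SUP_norm_psum_finite[OF assms] show ?thesis
  proof eventually_elim
    case (elim x)
    define W where "W l = (SUP j. ennreal (norm (psum Z (w l) 1 j x)))" for l
    define b where "b l = enn2real (W l)" for l
    have fin: "(\<Sum>l. W l) \<noteq> \<top>" using elim(1) by (simp add: W_def)
    have "W l \<le> (\<Sum>l. W l)" for l
      using sum_le_suminf[OF summableI, of "{l}" W] by simp
    then have "W l \<noteq> \<top>" for l using neq_top_trans[OF fin] by blast
    then have W: "W l = ennreal (b l)" for l
      by (simp add: b_def ennreal_enn2real_if)
    show ?case
    proof (rule convergent_sum_diagonal[where T="\<lambda>l n. psum Z (w l) 1 (n + 1) x"])
      show "norm (psum Z (w l) 1 (n + 1) x) \<le> b l" for l n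
      proof -
        have "ennreal (norm (psum Z (w l) 1 (n + 1) x)) \<le> W l"
          unfolding W_def by (rule SUP_upper) simp
        then show ?thesis unfolding W by (simp add: b_def)
      qed
      show "summable b"
        using fin unfolding W by (intro summable_suminf_not_top) (simp_all add: b_def)
      show "convergent (\<lambda>n. psum Z (w l) 1 (n + 1) x)" for l
        using elim(2) convergent_ignore_initial_segment[of "\<lambda>j. psum Z (w l) 1 j x" 1] by simp
    qed (simp add: psum_eq_0)
  qed
qed

theorem AE_summable_scaleR_moving_average:
  fixes a :: "nat \<Rightarrow> nat \<Rightarrow> real" and u :: "nat \<Rightarrow> 'h::{real_inner, complete_space}"
  assumes I: "{1..} \<subseteq> I" and C: "0 \<le> C" and \<alpha>: "1 < \<alpha>"
    and a: "\<And>n k. 1 \<le> k \<Longrightarrow> k \<le> n \<Longrightarrow> \<bar>a n k\<bar> \<le> C * real (n - k + 1) powr - \<alpha>"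
    and u: "summable (\<lambda>n. (norm (u (Suc n)))\<^sup>2)"
  shows "AE x in M. summable (\<lambda>n. (\<Sum>k=1..Suc n. a (Suc n) k * Z k x) *\<^sub>R u (Suc n))"
proof -
  define w where "w = diagonal a u"
  have w: "summable (\<lambda>k. (norm (w l k))\<^sup>2)" for l
    unfolding w_def using C \<alpha> a u by (rule summable_norm_diagonal_sq)
  have w_tail: "summable (\<lambda>l. sqrt (\<Sum>k. (norm (w l (k + 1)))\<^sup>2))"
    unfolding w_def using C \<alpha> a u by (rule summable_sqrt_suminf_norm_diagonal_sq)
  have diagonals: "(\<Sum>n<N. (\<Sum>k=1..Suc n. a (Suc n) k * Z k x) *\<^sub>R u (Suc n))
      = (\<Sum>l<N. psum Z (w l) 1 (N - l + 1) x)" for N x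
  proof -
    have "(\<Sum>n<N. (\<Sum>k=1..Suc n. a (Suc n) k * Z k x) *\<^sub>R u (Suc n))
        = (\<Sum>n<N. \<Sum>k=1..Suc n. (a (Suc n) k * Z k x) *\<^sub>R u (Suc n))"
      by (simp only: scaleR_sum_left)
    also have "\<dots> = (\<Sum>l<N. \<Sum>k\<in>{1..<N - l + 1}. (a (k + l) k * Z k x) *\<^sub>R u (k + l))"
      using sum_diagonals[of "\<lambda>n k. (a n k * Z k x) *\<^sub>R u n" N] by (simp only:)
    also have "\<dots> = (\<Sum>l<N. psum Z (w l) 1 (N - l + 1) x)"
      by (simp add: psum_def w_def diagonal_def mult.commute)
    finally show ?thesis .
  qed
  show ?thesis
    unfolding summable_iff_convergent diagonals by (rule AE_convergent_diagonal_psum[OF I w w_tail])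
qed

end

lemma (in prob_space) expectation_eq_0_if_symmetric_rv:
  assumes [measurable]: "X \<in> borel_measurable M" and "symmetric_rv M X"
  shows "expectation X = 0"
proof -
  have "expectation X = integral\<^sup>L (distr M borel X) (\<lambda>y. y)"
    by (simp add: integral_distr)
  also have "\<dots> = integral\<^sup>L (distr M borel (\<lambda>x. - X x)) (\<lambda>y. y)"
    using assms(2) by (simp add: symmetric_rv_def)
  also have "\<dots> = - expectation X"
    by (simp add: integral_distr)
  finally show ?thesis by simp
qed

theorem mainTheorem8:
  fixes M :: "'a measure"
    and Z :: "nat \<Rightarrow> 'a \<Rightarrow> real"
    and a :: "nat \<Rightarrow> nat \<Rightarrow> real"
    and u :: "nat \<Rightarrow> 'h :: {real_inner, complete_space}"
    and C \<alpha> :: real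
  assumes "prob_space M"
    and indep: "prob_space.indep_vars M (\<lambda>_. borel) Z {1..}"
    and symm: "\<And>k. k \<ge> 1 \<Longrightarrow> symmetric_rv M (Z k)"
    and var_int: "\<And>k. k \<ge> 1 \<Longrightarrow> integrable M (\<lambda>x. (Z k x)\<^sup>2)"
    and var1: "\<And>k. k \<ge> 1 \<Longrightarrow> prob_space.expectation M (\<lambda>x. (Z k x)\<^sup>2) = 1"
    and C_pos: "C > 0" and alpha: "\<alpha> > 1"
    and bound: "\<And>n k. 1 \<le> k \<Longrightarrow> k \<le> n \<Longrightarrow> \<bar>a n k\<bar> \<le> C * (real (n - k + 1)) powr (- \<alpha>)"
    and u_sq: "summable (\<lambda>n. (norm (u (Suc n)))\<^sup>2)"
  shows "(AE x in M. summable (\<lambda>n. (\<Sum>k=1..Suc n. a (Suc n) k * Z k x) *\<^sub>R u (Suc n)))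
    \<and> (\<forall>\<epsilon> :: nat \<Rightarrow> real. (\<forall>n. \<epsilon> n \<in> {-1, 1}) \<longrightarrow>
         (AE x in M. summable (\<lambda>n. (\<epsilon> (Suc n) * (\<Sum>k=1..Suc n. a (Suc n) k * Z k x)) *\<^sub>R u (Suc n))))"
proof -
  interpret prob_space M by fact
  have Z_meas: "Z k \<in> borel_measurable M" if "k \<ge> 1" for k
    using indep that unfolding indep_vars_def by auto
  interpret standardized_indep_vars M Z "{1..}"
    using indep var_int var1 symm Z_meas
    by unfold_locales (auto intro: expectation_eq_0_if_symmetric_rv)
  have moving_average: "AE x in M. summable (\<lambda>n. (\<Sum>k=1..Suc n. a (Suc n) k * Z k x) *\<^sub>R v (Suc n))"
    if "summable (\<lambda>n. (norm (v (Suc n)))\<^sup>2)" for v :: "nat \<Rightarrow> 'h"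
    using C_pos by (intro AE_summable_scaleR_moving_average[OF _ _ alpha bound that]) auto
  show ?thesis
  proof (intro conjI allI impI)
    show "AE x in M. summable (\<lambda>n. (\<Sum>k=1..Suc n. a (Suc n) k * Z k x) *\<^sub>R u (Suc n))"
      using moving_average[OF u_sq] .
  next
    fix \<epsilon> :: "nat \<Rightarrow> real"
    assume \<epsilon>: "\<forall>n. \<epsilon> n \<in> {-1, 1}"
    have "\<bar>\<epsilon> n\<bar> = 1" for n using \<epsilon>[rule_format, of n] by auto
    then have "summable (\<lambda>n. (norm (\<epsilon> (Suc n) *\<^sub>R u (Suc n)))\<^sup>2)"
      using u_sq by simp
    from moving_average[OF this]
    show "AE x in M. summable (\<lambda>n. (\<epsilon> (Suc n) * (\<Sum>k=1..Suc n. a (Suc n) k * Z k x)) *\<^sub>R u (Suc n))"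
      by (simp add: mult.commute)
  qed
qed

end
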